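(* Let $\lambda>0$, $d_v>0$, $\epsilon\ge0$, $m=\lambda\pi d_v^2$, $k\ge0$, and let $\tilde{\mathbf x}_1,\dots,\tilde{\mathbf x}_k\in\mathbb R^2$ be given, with $f(\mathbf x)$ the set of their orderings. With $A_i=\mathbf b(\tilde{\mathbf x}_i,\epsilon)$ the closed Euclidean ball of radius $\epsilon$ about $\tilde{\mathbf x}_i$ and $|A_i|$ its Lebesgue measure, $$\mathbb P\big[\Delta_s(f(\mathbf x),F(\mathbf 0))\le\epsilon\big]\le m^k e^{-m}\prod_{i=1}^k\frac{|A_i|}{\pi d_v^2}.$$
   Context: Landmarks seen from the origin are the points of a homogeneous Poisson point process $\Phi_{\mathbf 0}$ of intensity $\lambda$ on $\mathbb R^2$; a landmark is visible from $\mathbf 0$ if its distance to $\mathbf 0$ is at most $d_v$, and $N_{\mathbf 0}$ is the number of visible landmarks. The random measurement $F(\mathbf 0)$ is the set of all $N_{\mathbf 0}\times 2$ matrices whose rows are the positions of the visible landmarks (relative to $\mathbf 0$) listed in some order; $f(\mathbf x)$ is the set of all $k\times2$ matrices whose rows are $\tilde{\mathbf x}_1,\dots,\tilde{\mathbf x}_k$ in some order. For matrices, $\Delta_v(\mathbf v,\mathbf w)=\max_i\|\mathbf v_{i,:}-\mathbf w_{i,:}\|_2$ if they have the same number of rows (equal to $0$ if both have zero rows) and $\infty$ otherwise; $\Delta_s(f,F)=\min_{\mathbf v\in f,\mathbf w\in F}\Delta_v(\mathbf v,\mathbf w)$. *)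

theory Defs
  imports "HOL-Probability.Probability"
begin

type_synonym pt = "real ^ 2"

definition poisson_pp :: "'w measure \<Rightarrow> real \<Rightarrow> ('w \<Rightarrow> pt set) \<Rightarrow> bool" where
  "poisson_pp M lam Phi \<longleftrightarrow>
     prob_space M \<and>
     (\<forall>\<omega>\<in>space M. \<forall>B. bounded B \<longrightarrow> finite (Phi \<omega> \<inter> B)) \<and>
     (\<forall>B \<in> sets lborel. bounded B \<longrightarrow>
        (\<lambda>\<omega>. card (Phi \<omega> \<inter> B)) \<in> measurable M (count_space UNIV) \<and>
        (\<forall>n::nat. measure M {\<omega>\<in>space M. card (Phi \<omega> \<inter> B) = n}
            = exp (- (lam * measure lborel B)) * (lam * measure lborel B) ^ n / fact n)) \<and>
     (\<forall>(I::nat set) B. finite I \<longrightarrow> (\<forall>i\<in>I. B i \<in> sets lborel \<and> bounded (B i)) \<longrightarrow>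
        disjoint_family_on B I \<longrightarrow>
        prob_space.indep_vars M (\<lambda>_. count_space UNIV) (\<lambda>i \<omega>. card (Phi \<omega> \<inter> B i)) I)"

text \<open>Delta_v on matrices, represented as lists of rows (points in the plane).\<close>
definition Delta_v :: "pt list \<Rightarrow> pt list \<Rightarrow> ereal" where
  "Delta_v v w = (if length v = length w then
       (if v = [] then 0 else ereal (Max {norm (v ! i - w ! i) | i. i < length v}))
     else \<infinity>)"

definition Delta_s :: "pt list set \<Rightarrow> pt list set \<Rightarrow> ereal" where
  "Delta_s f F = (INF v\<in>f. INF w\<in>F. Delta_v v w)"

definition orderings :: "pt list \<Rightarrow> pt list set" where
  "orderings xs = {v. mset v = mset xs}"

text \<open>F(0): all orderings (as row lists) of the landmarks of the configuration P that are
  within distance dv of the origin.\<close>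
definition meas_F :: "real \<Rightarrow> pt set \<Rightarrow> pt list set" where
  "meas_F dv P = {w. distinct w \<and> set w = P \<inter> cball 0 dv}"

end

theory Submission
  imports Defs
begin

text \<open>The Poisson process is only described through the numbers of landmarks it puts in bounded
  Borel sets, so the event is approached through a grid of squares of side s cut down to the
  visibility disc. If the visible landmarks can be matched to x_1, ..., x_k within eps + s, sending
  each x_i to the cell of its partner gives an assignment g of cells near the x_i such that every
  cell contains exactly as many landmarks as g sends to it; conversely such cell counts yield a
  matching within eps + 3 s. Hence the event is the intersection, over s tending to 0, of finite
  unions of cell-count events, and is measurable. Since disjoint cells have independent Poisson
  counts, each cell-count event has probability at most e^-m lam^k times the product of the areas
  of the cells g_i; summing over g gives e^-m lam^k (pi (eps + 3 s)^2)^k, which tends to the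
  claimed bound.\<close>

definition poisson_prob :: "real \<Rightarrow> nat \<Rightarrow> real" where
  "poisson_prob r n = exp (- r) * r ^ n / fact n"

lemma poisson_prob_nonneg: "r \<ge> 0 \<Longrightarrow> poisson_prob r n \<ge> 0"
  by (simp add: poisson_prob_def)

lemma poisson_prob_le:
  assumes "r \<ge> 0"
  shows "poisson_prob r n \<le> exp (- r) * r ^ n"
proof -
  have "exp (- r) * r ^ n / fact n \<le> exp (- r) * r ^ n / 1"
    using assms by (intro divide_left_mono) (auto simp: fact_ge_1)
  then show ?thesis by (simp add: poisson_prob_def)
qed

lemma prod_poisson_prob_fibres_le:
  fixes g :: "'a \<Rightarrow> 'c" and \<mu> :: "'c \<Rightarrow> real"
  assumes "finite I" "finite D" "g ` D \<subseteq> I" "lam \<ge> 0" "\<And>c. c \<in> I \<Longrightarrow> \<mu> c \<ge> 0"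
  shows "(\<Prod>c\<in>I. poisson_prob (lam * \<mu> c) (card {i\<in>D. g i = c}))
    \<le> exp (- (lam * (\<Sum>c\<in>I. \<mu> c))) * lam ^ card D * (\<Prod>i\<in>D. \<mu> (g i))"
proof -
  have "(\<Prod>c\<in>I. poisson_prob (lam * \<mu> c) (card {i\<in>D. g i = c}))
      \<le> (\<Prod>c\<in>I. exp (- (lam * \<mu> c)) * (lam * \<mu> c) ^ card {i\<in>D. g i = c})"
    using assms by (intro prod_mono conjI poisson_prob_nonneg poisson_prob_le) auto
  also have "\<dots> = (\<Prod>c\<in>I. exp (- (lam * \<mu> c))) * (\<Prod>c\<in>I. \<Prod>i\<in>{i\<in>D. g i = c}. lam * \<mu> (g i))"
    by (simp add: prod.distrib)
  also have "(\<Prod>c\<in>I. \<Prod>i\<in>{i\<in>D. g i = c}. lam * \<mu> (g i)) = (\<Prod>i\<in>D. lam * \<mu> (g i))"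
    using assms(2,1,3) by (rule prod.group)
  also have "(\<Prod>c\<in>I. exp (- (lam * \<mu> c))) = exp (- (lam * (\<Sum>c\<in>I. \<mu> c)))"
    using assms(1) by (simp add: exp_sum sum_distrib_left flip: sum_negf)
  finally show ?thesis
    by (simp add: prod.distrib mult.assoc)
qed

lemma poisson_pp_prob_space: "poisson_pp M lam Phi \<Longrightarrow> prob_space M"
  by (simp add: poisson_pp_def)

lemma poisson_pp_finite:
  "poisson_pp M lam Phi \<Longrightarrow> \<omega> \<in> space M \<Longrightarrow> bounded B \<Longrightarrow> finite (Phi \<omega> \<inter> B)"
  by (simp add: poisson_pp_def)

lemma poisson_pp_count_event_sets:
  assumes "poisson_pp M lam Phi" "B \<in> sets lborel" "bounded B"
  shows "{\<omega>\<in>space M. card (Phi \<omega> \<inter> B) = n} \<in> sets M"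
proof -
  have "(\<lambda>\<omega>. card (Phi \<omega> \<inter> B)) \<in> measurable M (count_space UNIV)"
    using assms by (simp add: poisson_pp_def)
  then show ?thesis by measurable
qed

lemma poisson_pp_prob_count:
  assumes "poisson_pp M lam Phi" "B \<in> sets lborel" "bounded B"
  shows "measure M {\<omega>\<in>space M. card (Phi \<omega> \<inter> B) = n} = poisson_prob (lam * measure lborel B) n"
  using assms by (simp add: poisson_pp_def poisson_prob_def)

lemma poisson_pp_indep_counts:
  fixes B :: "nat \<Rightarrow> pt set"
  assumes "poisson_pp M lam Phi" "finite I"
    and "\<And>i. i \<in> I \<Longrightarrow> B i \<in> sets lborel \<and> bounded (B i)" "disjoint_family_on B I"
  shows "prob_space.indep_vars M (\<lambda>_. count_space UNIV) (\<lambda>i \<omega>. card (Phi \<omega> \<inter> B i)) I"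
proof -
  have "\<forall>(I::nat set) B. finite I \<longrightarrow> (\<forall>i\<in>I. B i \<in> sets lborel \<and> bounded (B i)) \<longrightarrow>
      disjoint_family_on B I \<longrightarrow>
      prob_space.indep_vars M (\<lambda>_. count_space UNIV) (\<lambda>i \<omega>. card (Phi \<omega> \<inter> B i)) I"
    using assms(1) by (simp add: poisson_pp_def)
  then show ?thesis using assms(2-4) by blast
qed

lemma poisson_pp_counts_sets:
  assumes P: "poisson_pp M lam Phi" and "finite J"
    and B: "\<And>c. c \<in> J \<Longrightarrow> B c \<in> sets lborel \<and> bounded (B c)"
  shows "{\<omega>\<in>space M. \<forall>c\<in>J. card (Phi \<omega> \<inter> B c) = a c} \<in> sets M"
  using poisson_pp_count_event_sets[OF P] B \<open>finite J\<close>
  by (intro sets.sets_Collect_finite_All) auto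

lemma disjoint_family_on_reindex:
  assumes "disjoint_family_on B J" "inj_on h I" "h ` I \<subseteq> J"
  shows "disjoint_family_on (\<lambda>i. B (h i)) I"
  unfolding disjoint_family_on_def
proof (intro ballI impI)
  fix i j assume "i \<in> I" "j \<in> I" "i \<noteq> j"
  then have "h i \<noteq> h j" "h i \<in> J" "h j \<in> J"
    using assms(2,3) by (auto dest: inj_onD)
  then show "B (h i) \<inter> B (h j) = {}" using disjoint_family_onD[OF assms(1)] by blast
qed

lemma poisson_pp_prob_counts:
  fixes B :: "'c \<Rightarrow> pt set" and a :: "'c \<Rightarrow> nat"
  assumes P: "poisson_pp M lam Phi" and "finite J"
    and B: "\<And>c. c \<in> J \<Longrightarrow> B c \<in> sets lborel \<and> bounded (B c)"
    and disj: "disjoint_family_on B J"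
  shows "measure M {\<omega>\<in>space M. \<forall>c\<in>J. card (Phi \<omega> \<inter> B c) = a c}
    = (\<Prod>c\<in>J. poisson_prob (lam * measure lborel (B c)) (a c))"
proof (cases "J = {}")
  case True
  with P show ?thesis by (simp add: poisson_pp_def prob_space.prob_space)
next
  case False
  interpret prob_space M using P by (rule poisson_pp_prob_space)
  \<comment> \<open>Independence is only postulated for families indexed by naturals, so enumerate J.\<close>
  define n where "n = card J"
  have "n > 0" using False \<open>finite J\<close> by (simp add: n_def card_gt_0_iff)
  obtain h where h: "bij_betw h {..<n} J"
    using ex_bij_betw_nat_finite[OF \<open>finite J\<close>] by (auto simp: n_def atLeast0LessThan)
  have J_eq: "J = h ` {..<n}" using h by (simp add: bij_betw_def)
  have hJ: "h i \<in> J" if "i < n" for i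
    using J_eq that by blast
  have disj_h: "disjoint_family_on (\<lambda>i. B (h i)) {..<n}"
    by (rule disjoint_family_on_reindex[OF disj bij_betw_imp_inj_on[OF h]]) (simp add: J_eq)
  define X where "X i \<omega> = card (Phi \<omega> \<inter> B (h i))" for i \<omega>
  have indep: "indep_vars (\<lambda>_. count_space UNIV) X {..<n}"
    unfolding X_def
  proof (rule poisson_pp_indep_counts[OF P _ _ disj_h])
    show "finite {..<n}" by (rule finite_lessThan)
    fix i assume "i \<in> {..<n}"
    then show "B (h i) \<in> sets lborel \<and> bounded (B (h i))" using B hJ by simp
  qed
  have "{\<omega>\<in>space M. \<forall>c\<in>J. card (Phi \<omega> \<inter> B c) = a c} = (\<Inter>i<n. X i -` {a (h i)} \<inter> space M)"
    unfolding J_eq X_def using \<open>n > 0\<close> by auto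
  also have "measure M \<dots> = (\<Prod>i<n. prob (X i -` {a (h i)} \<inter> space M))"
    using \<open>n > 0\<close> by (intro indep_varsD_finite[OF indep]) auto
  also have "\<dots> = (\<Prod>i<n. poisson_prob (lam * measure lborel (B (h i))) (a (h i)))"
  proof (rule prod.cong[OF refl])
    fix i assume "i \<in> {..<n}"
    then have "B (h i) \<in> sets lborel" "bounded (B (h i))" using B hJ by auto
    moreover have "X i -` {a (h i)} \<inter> space M = {\<omega>\<in>space M. card (Phi \<omega> \<inter> B (h i)) = a (h i)}"
      by (auto simp: X_def)
    ultimately show "prob (X i -` {a (h i)} \<inter> space M)
        = poisson_prob (lam * measure lborel (B (h i))) (a (h i))"
      using poisson_pp_prob_count[OF P] by simp
  qed
  also have "\<dots> = (\<Prod>c\<in>J. poisson_prob (lam * measure lborel (B c)) (a c))"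
    using prod.reindex_bij_betw[OF h] by simp
  finally show ?thesis .
qed

definition grid_index :: "real \<Rightarrow> pt \<Rightarrow> int \<times> int" where
  "grid_index s y = (\<lfloor>y$1 / s\<rfloor>, \<lfloor>y$2 / s\<rfloor>)"

definition grid_cell :: "real \<Rightarrow> real \<Rightarrow> int \<times> int \<Rightarrow> pt set" where
  "grid_cell dv s c = {y \<in> cball 0 dv. grid_index s y = c}"

definition grid_indices :: "real \<Rightarrow> real \<Rightarrow> (int \<times> int) set" where
  "grid_indices dv s = {-\<lceil>dv / s\<rceil>..\<lceil>dv / s\<rceil>} \<times> {-\<lceil>dv / s\<rceil>..\<lceil>dv / s\<rceil>}"

lemma finite_grid_indices: "finite (grid_indices dv s)"
  by (simp add: grid_indices_def)

lemma grid_index_in_grid_indices: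
  assumes "s > 0" "y \<in> cball 0 dv"
  shows "grid_index s y \<in> grid_indices dv s"
proof -
  have "\<lfloor>y$j / s\<rfloor> \<in> {-\<lceil>dv / s\<rceil>..\<lceil>dv / s\<rceil>}" for j
  proof -
    have "\<bar>y$j\<bar> \<le> dv" using component_le_norm_cart[of y j] assms(2) by simp
    then have "-dv / s \<le> y$j / s" "y$j / s \<le> dv / s"
      using divide_right_mono[of "-dv" "y$j" s] divide_right_mono[of "y$j" dv s] assms(1) by auto
    then have "\<lfloor>-(dv / s)\<rfloor> \<le> \<lfloor>y$j / s\<rfloor>" "\<lfloor>y$j / s\<rfloor> \<le> \<lfloor>dv / s\<rfloor>"
      by (auto intro: floor_mono)
    then show ?thesis using floor_le_ceiling[of "dv / s"] by (simp add: floor_minus del: floor_le_ceiling)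
  qed
  then show ?thesis by (simp add: grid_index_def grid_indices_def)
qed

lemma grid_cell_sets: "grid_cell dv s c \<in> sets lborel"
proof -
  have "grid_cell dv s c = cball 0 dv \<inter> {y. \<lfloor>y$1 / s\<rfloor> = fst c \<and> \<lfloor>y$2 / s\<rfloor> = snd c}"
    by (cases c) (auto simp: grid_cell_def grid_index_def)
  also have "\<dots> \<in> sets lborel"
    by measurable
  finally show ?thesis .
qed

lemma bounded_grid_cell: "bounded (grid_cell dv s c)"
  by (rule bounded_subset[of "cball 0 dv"]) (auto simp: grid_cell_def)

lemma disjoint_family_on_grid_cell: "disjoint_family_on (grid_cell dv s) I"
  by (auto simp: disjoint_family_on_def grid_cell_def)

lemma UN_grid_cell: "s > 0 \<Longrightarrow> (\<Union>c\<in>grid_indices dv s. grid_cell dv s c) = cball 0 dv"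
  using grid_index_in_grid_indices by (auto simp: grid_cell_def)

lemma dist_grid_cell_less:
  assumes "s > 0" "y \<in> grid_cell dv s c" "z \<in> grid_cell dv s c"
  shows "dist y z < 2 * s"
proof -
  have same_floor: "\<lfloor>y$j / s\<rfloor> = \<lfloor>z$j / s\<rfloor>" for j :: 2
    using assms(2,3) exhaust_2[of j] by (auto simp: grid_cell_def grid_index_def)
  have "\<bar>y$j / s - z$j / s\<bar> < 1" for j
    using same_floor[of j] by linarith
  then have comp: "\<bar>(y - z)$j\<bar> < s" for j
    using assms(1) by (simp add: diff_divide_distrib[symmetric] abs_divide)
  have "norm (y - z) \<le> \<bar>(y - z)$1\<bar> + \<bar>(y - z)$2\<bar>"
    using norm_le_l1_cart[of "y - z"] by (simp add: sum_2)
  then show ?thesis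
    using comp[of 1] comp[of 2] by (simp add: dist_norm)
qed

lemma measure_UN_grid_cell:
  "finite C \<Longrightarrow> measure lborel (\<Union>c\<in>C. grid_cell dv s c) = (\<Sum>c\<in>C. measure lborel (grid_cell dv s c))"
  using grid_cell_sets emeasure_bounded_finite[OF bounded_grid_cell]
  by (intro measure_finite_Union) (auto simp: disjoint_family_on_grid_cell less_top)

lemma measure_cball_2: "r \<ge> 0 \<Longrightarrow> measure lborel (cball (x::pt) r) = pi * r ^ 2"
  using content_cball[of r x] by (simp add: unit_ball_vol_2)

lemma sum_measure_grid_cell:
  "s > 0 \<Longrightarrow> dv \<ge> 0 \<Longrightarrow> (\<Sum>c\<in>grid_indices dv s. measure lborel (grid_cell dv s c)) = pi * dv ^ 2"
  using measure_UN_grid_cell[OF finite_grid_indices, symmetric] by (simp add: UN_grid_cell measure_cball_2)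

definition near_cells :: "real \<Rightarrow> real \<Rightarrow> real \<Rightarrow> pt \<Rightarrow> (int \<times> int) set" where
  "near_cells dv s r x = {c \<in> grid_indices dv s. grid_cell dv s c \<inter> cball x r \<noteq> {}}"

lemma finite_near_cells: "finite (near_cells dv s r x)"
  by (rule finite_subset[OF _ finite_grid_indices]) (auto simp: near_cells_def)

lemma PiE_near_cells_image_subset:
  assumes "g \<in> (\<Pi>\<^sub>E i\<in>I. near_cells dv s r (x i))"
  shows "g ` I \<subseteq> grid_indices dv s"
proof (rule image_subsetI)
  fix i assume "i \<in> I"
  then have "g i \<in> near_cells dv s r (x i)" using PiE_mem[OF assms] by blast
  then show "g i \<in> grid_indices dv s" by (simp add: near_cells_def)
qed

lemma dist_le_if_near_cell:
  assumes "s > 0" "c \<in> near_cells dv s r x" "y \<in> grid_cell dv s c"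
  shows "dist x y \<le> r + 2 * s"
proof -
  obtain z where "z \<in> grid_cell dv s c" "dist x z \<le> r"
    using assms(2) by (auto simp: near_cells_def)
  moreover have "dist z y < 2 * s"
    using dist_grid_cell_less[OF assms(1) \<open>z \<in> grid_cell dv s c\<close> assms(3)] .
  ultimately show ?thesis
    using dist_triangle[of x y z] by simp
qed

lemma sum_measure_near_cells_le:
  assumes "s > 0" "r \<ge> 0"
  shows "(\<Sum>c\<in>near_cells dv s r x. measure lborel (grid_cell dv s c)) \<le> pi * (r + 2 * s) ^ 2"
proof -
  have "(\<Sum>c\<in>near_cells dv s r x. measure lborel (grid_cell dv s c))
      = measure lborel (\<Union>c\<in>near_cells dv s r x. grid_cell dv s c)"
    by (rule measure_UN_grid_cell[symmetric, OF finite_near_cells])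
  also have "\<dots> \<le> measure lborel (cball x (r + 2 * s))"
  proof (rule measure_mono_fmeasurable)
    show "(\<Union>c\<in>near_cells dv s r x. grid_cell dv s c) \<subseteq> cball x (r + 2 * s)"
      using dist_le_if_near_cell[OF assms(1)] by auto
    show "(\<Union>c\<in>near_cells dv s r x. grid_cell dv s c) \<in> sets lborel"
      by (intro sets.finite_UN finite_near_cells ballI grid_cell_sets)
  qed (simp add: fmeasurable_compact)
  also have "\<dots> = pi * (r + 2 * s) ^ 2"
    using assms by (simp add: measure_cball_2)
  finally show ?thesis .
qed

lemma card_nth_in_distinct:
  assumes "distinct w"
  shows "card {i\<in>{..<length w}. w ! i \<in> S} = card (set w \<inter> S)"
proof -
  have "set w \<inter> S = (!) w ` {i\<in>{..<length w}. w ! i \<in> S}"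
    by (auto simp: in_set_conv_nth)
  moreover have "inj_on ((!) w) {i\<in>{..<length w}. w ! i \<in> S}"
    using assms by (intro inj_on_nth) auto
  ultimately show ?thesis by (simp add: card_image)
qed

lemma ex_bij_betw_fibres:
  fixes g :: "'a \<Rightarrow> 'c" and A :: "'c \<Rightarrow> 'b set"
  assumes "finite D" "g ` D \<subseteq> I" "disjoint_family_on A I"
    and "\<And>c. c \<in> I \<Longrightarrow> finite (A c)"
    and "\<And>c. c \<in> I \<Longrightarrow> card {i\<in>D. g i = c} = card (A c)"
  obtains h where "bij_betw h D (\<Union>c\<in>I. A c)" "\<And>i. i \<in> D \<Longrightarrow> h i \<in> A (g i)"
proof -
  have "\<forall>c\<in>I. \<exists>H. bij_betw H {i\<in>D. g i = c} (A c)"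
  proof
    fix c assume "c \<in> I"
    moreover have "finite {i\<in>D. g i = c}" using assms(1) by simp
    ultimately show "\<exists>H. bij_betw H {i\<in>D. g i = c} (A c)"
      using bij_betw_iff_card assms(4,5) by blast
  qed
  from bchoice[OF this] obtain H where H: "\<And>c. c \<in> I \<Longrightarrow> bij_betw (H c) {i\<in>D. g i = c} (A c)"
    by blast
  define h where "h i = H (g i) i" for i
  have "bij_betw h {i\<in>D. g i = c} (A c)" if "c \<in> I" for c
    using H[OF that] by (rule bij_betw_cong[THEN iffD1, rotated]) (simp add: h_def)
  then have "bij_betw h (\<Union>c\<in>I. {i\<in>D. g i = c}) (\<Union>c\<in>I. A c)"
    by (rule bij_betw_UNION_disjoint[OF assms(3)])
  moreover have "(\<Union>c\<in>I. {i\<in>D. g i = c}) = D"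
    using assms(2) by auto
  moreover have "h i \<in> A (g i)" if "i \<in> D" for i
    using H[of "g i"] assms(2) that by (auto simp: h_def dest: bij_betwE)
  ultimately show thesis
    using that by simp
qed

lemma grid_counts_of_listing:
  assumes "s > 0" and w: "w \<in> meas_F dv P" "length w = length xs"
    and close: "\<And>i. i < length xs \<Longrightarrow> dist (xs ! i) (w ! i) \<le> r"
  obtains g where "g \<in> (\<Pi>\<^sub>E i\<in>{..<length xs}. near_cells dv s r (xs ! i))"
    and "\<And>c. card (P \<inter> grid_cell dv s c) = card {i\<in>{..<length xs}. g i = c}"
proof -
  define g where "g = restrict (\<lambda>i. grid_index s (w ! i)) {..<length xs}"
  have visible: "w ! i \<in> P \<inter> cball 0 dv" if "i < length xs" for i
    using w that by (auto simp: meas_F_def)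
  have "g i \<in> near_cells dv s r (xs ! i)" if "i < length xs" for i
  proof -
    have "w ! i \<in> grid_cell dv s (g i) \<inter> cball (xs ! i) r"
      using visible close that by (auto simp: g_def grid_cell_def)
    then show ?thesis
      using grid_index_in_grid_indices[OF \<open>s > 0\<close>] visible that by (auto simp: near_cells_def g_def)
  qed
  then have "g \<in> (\<Pi>\<^sub>E i\<in>{..<length xs}. near_cells dv s r (xs ! i))"
    by (auto simp: g_def)
  moreover have "card (P \<inter> grid_cell dv s c) = card {i\<in>{..<length xs}. g i = c}" for c
  proof -
    have "{i\<in>{..<length xs}. g i = c} = {i\<in>{..<length w}. w ! i \<in> grid_cell dv s c}"
      using visible w(2) by (auto simp: g_def grid_cell_def)
    moreover have "set w \<inter> grid_cell dv s c = P \<inter> grid_cell dv s c"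
      using w(1) unfolding meas_F_def grid_cell_def by blast
    moreover have "distinct w"
      using w(1) by (simp add: meas_F_def)
    ultimately show ?thesis
      using card_nth_in_distinct by metis
  qed
  ultimately show thesis
    using that by blast
qed

lemma listing_of_grid_counts:
  assumes "s > 0" and fin: "finite (P \<inter> cball 0 dv)"
    and g: "g \<in> (\<Pi>\<^sub>E i\<in>{..<length xs}. near_cells dv s r (xs ! i))"
    and counts: "\<And>c. c \<in> grid_indices dv s \<Longrightarrow>
      card (P \<inter> grid_cell dv s c) = card {i\<in>{..<length xs}. g i = c}"
  obtains w where "w \<in> meas_F dv P" "length w = length xs"
    "\<And>i. i < length xs \<Longrightarrow> dist (xs ! i) (w ! i) \<le> r + 2 * s"
proof -
  let ?k = "length xs"
  have near: "g i \<in> near_cells dv s r (xs ! i)" if "i < ?k" for i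
    using PiE_mem[OF g] that by simp
  have g_indices: "g ` {..<?k} \<subseteq> grid_indices dv s"
    using g by (rule PiE_near_cells_image_subset)
  have disj: "disjoint_family_on (\<lambda>c. P \<inter> grid_cell dv s c) (grid_indices dv s)"
    using disjoint_family_on_grid_cell unfolding disjoint_family_on_def by blast
  have fin_cell: "finite (P \<inter> grid_cell dv s c)" for c
    by (rule finite_subset[OF _ fin]) (auto simp: grid_cell_def)
  have fibres: "card {i\<in>{..<?k}. g i = c} = card (P \<inter> grid_cell dv s c)"
    if "c \<in> grid_indices dv s" for c
    using counts[OF that] by simp
  obtain h where h: "bij_betw h {..<?k} (\<Union>c\<in>grid_indices dv s. P \<inter> grid_cell dv s c)"
    and h_cell: "\<And>i. i \<in> {..<?k} \<Longrightarrow> h i \<in> P \<inter> grid_cell dv s (g i)"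
    using ex_bij_betw_fibres[OF finite_lessThan g_indices disj fin_cell fibres] by blast
  define w where "w = map h [0..<?k]"
  have "(\<Union>c\<in>grid_indices dv s. P \<inter> grid_cell dv s c) = P \<inter> cball 0 dv"
    using UN_grid_cell[OF \<open>s > 0\<close>] by blast
  then have "w \<in> meas_F dv P"
    using h by (auto simp: w_def meas_F_def distinct_map bij_betw_def atLeast0LessThan)
  moreover have "dist (xs ! i) (w ! i) \<le> r + 2 * s" if "i < ?k" for i
    using dist_le_if_near_cell[OF \<open>s > 0\<close> near] h_cell that by (auto simp: w_def)
  ultimately show thesis
    using that by (simp add: w_def)
qed

lemma Delta_v_lessD:
  assumes "Delta_v v w < ereal r"
  shows "length v = length w" "\<And>i. i < length v \<Longrightarrow> dist (v ! i) (w ! i) < r"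
proof -
  show len: "length v = length w"
    using assms by (auto simp: Delta_v_def split: if_splits)
  fix i assume "i < length v"
  then have "v \<noteq> []" "dist (v ! i) (w ! i) \<le> Max {norm (v ! j - w ! j) | j. j < length v}"
    by (auto simp: dist_norm intro!: Max_ge)
  with assms len show "dist (v ! i) (w ! i) < r"
    by (simp add: Delta_v_def)
qed

lemma Delta_v_le_ereal:
  assumes "length v = length w" "r \<ge> 0" "\<And>i. i < length v \<Longrightarrow> dist (v ! i) (w ! i) \<le> r"
  shows "Delta_v v w \<le> ereal r"
proof (cases "v = []")
  case False
  have "{norm (v ! i - w ! i) | i. i < length v} = (\<lambda>i. norm (v ! i - w ! i)) ` {..<length v}"
    by auto
  then have "Max {norm (v ! i - w ! i) | i. i < length v} \<le> r"
    using False assms(3) by (subst Max_le_iff) (auto simp: dist_norm)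
  with assms(1) False show ?thesis
    by (simp add: Delta_v_def)
qed (use assms in \<open>simp add: Delta_v_def\<close>)

lemma Delta_s_less_listing:
  assumes "Delta_s (orderings xs) (meas_F dv P) < ereal r"
  obtains w where "w \<in> meas_F dv P" "length w = length xs"
    "\<And>i. i < length xs \<Longrightarrow> dist (xs ! i) (w ! i) < r"
proof -
  obtain v w where v: "v \<in> orderings xs" and w: "w \<in> meas_F dv P" and vw: "Delta_v v w < ereal r"
    using assms unfolding Delta_s_def by (auto simp: INF_less_iff)
  obtain p where p: "p permutes {..<length v}" and xs: "permute_list p v = xs"
    using v mset_eq_permutation[of xs v] by (auto simp: orderings_def)
  \<comment> \<open>Reordering the landmarks along with the matched ordering of xs keeps the matching.\<close>
  have len: "length v = length w" using Delta_v_lessD(1)[OF vw] .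
  then have p': "p permutes {..<length w}" using p by simp
  have "permute_list p w \<in> meas_F dv P"
    using w mset_permute_list[OF p'] by (auto simp: meas_F_def dest: mset_eq_setD mset_eq_imp_distinct_iff)
  moreover have "length (permute_list p w) = length xs"
    using xs len by auto
  moreover have "dist (xs ! i) (permute_list p w ! i) < r" if "i < length xs" for i
  proof -
    have i: "i < length v" using that xs by auto
    then have "xs ! i = v ! p i" "permute_list p w ! i = w ! p i"
      using permute_list_nth[OF p i] permute_list_nth[OF p'] xs len by auto
    moreover have "p i < length v" using permutes_in_image[OF p] i by simp
    ultimately show ?thesis using Delta_v_lessD(2)[OF vw] by simp
  qed
  ultimately show thesis
    using that by blast
qed

lemma Delta_s_orderings_le:
  assumes "w \<in> F" "length w = length xs" "r \<ge> 0"
    and "\<And>i. i < length xs \<Longrightarrow> dist (xs ! i) (w ! i) \<le> r"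
  shows "Delta_s (orderings xs) F \<le> ereal r"
proof -
  have "Delta_s (orderings xs) F \<le> Delta_v xs w"
    unfolding Delta_s_def using assms(1)
    by (intro INF_lower2[of xs] INF_lower) (auto simp: orderings_def)
  also have "\<dots> \<le> ereal r"
    using assms by (intro Delta_v_le_ereal) auto
  finally show ?thesis .
qed

definition grid_event ::
    "'w measure \<Rightarrow> ('w \<Rightarrow> pt set) \<Rightarrow> real \<Rightarrow> real \<Rightarrow> real \<Rightarrow> pt list \<Rightarrow> 'w set" where
  "grid_event M Phi dv s r xs =
     (\<Union>g \<in> (\<Pi>\<^sub>E i\<in>{..<length xs}. near_cells dv s r (xs ! i)).
        {\<omega>\<in>space M. \<forall>c\<in>grid_indices dv s.
           card (Phi \<omega> \<inter> grid_cell dv s c) = card {i\<in>{..<length xs}. g i = c}})"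

lemma grid_event_sets:
  assumes "poisson_pp M lam Phi"
  shows "grid_event M Phi dv s r xs \<in> sets M"
proof -
  have cells: "grid_cell dv s c \<in> sets lborel \<and> bounded (grid_cell dv s c)" for c
    using grid_cell_sets bounded_grid_cell by blast
  show ?thesis
    unfolding grid_event_def
    by (intro sets.finite_UN finite_PiE finite_lessThan finite_near_cells ballI
        poisson_pp_counts_sets[OF assms finite_grid_indices cells])
qed

lemma prob_grid_counts_le:
  assumes P: "poisson_pp M lam Phi" and "lam \<ge> 0" "s > 0" "dv \<ge> 0"
    and g: "g ` {..<k} \<subseteq> grid_indices dv s"
  shows "measure M {\<omega>\<in>space M. \<forall>c\<in>grid_indices dv s.
      card (Phi \<omega> \<inter> grid_cell dv s c) = card {i\<in>{..<k}. g i = c}}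
    \<le> exp (- (lam * pi * dv ^ 2)) * lam ^ k * (\<Prod>i<k. measure lborel (grid_cell dv s (g i)))"
proof -
  let ?\<mu> = "\<lambda>c. measure lborel (grid_cell dv s c)"
  have cells: "grid_cell dv s c \<in> sets lborel \<and> bounded (grid_cell dv s c)" for c
    using grid_cell_sets bounded_grid_cell by blast
  have "measure M {\<omega>\<in>space M. \<forall>c\<in>grid_indices dv s.
      card (Phi \<omega> \<inter> grid_cell dv s c) = card {i\<in>{..<k}. g i = c}}
      = (\<Prod>c\<in>grid_indices dv s. poisson_prob (lam * ?\<mu> c) (card {i\<in>{..<k}. g i = c}))"
    by (rule poisson_pp_prob_counts[OF P finite_grid_indices cells disjoint_family_on_grid_cell])
  also have "\<dots> \<le> exp (- (lam * (\<Sum>c\<in>grid_indices dv s. ?\<mu> c))) * lam ^ card {..<k} * (\<Prod>i<k. ?\<mu> (g i))"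
    by (rule prod_poisson_prob_fibres_le[OF finite_grid_indices finite_lessThan g \<open>lam \<ge> 0\<close>]) simp
  also have "\<dots> = exp (- (lam * pi * dv ^ 2)) * lam ^ k * (\<Prod>i<k. ?\<mu> (g i))"
    by (simp add: sum_measure_grid_cell[OF \<open>s > 0\<close> \<open>dv \<ge> 0\<close>])
  finally show ?thesis .
qed

lemma measure_grid_event_le:
  assumes P: "poisson_pp M lam Phi" and "lam \<ge> 0" "s > 0" "dv \<ge> 0" "r \<ge> 0"
  shows "measure M (grid_event M Phi dv s r xs)
    \<le> exp (- (lam * pi * dv ^ 2)) * lam ^ length xs * (pi * (r + 2 * s) ^ 2) ^ length xs"
proof -
  interpret prob_space M using P by (rule poisson_pp_prob_space)
  let ?k = "length xs" and ?C = "\<lambda>i. near_cells dv s r (xs ! i)"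
  let ?\<mu> = "\<lambda>c. measure lborel (grid_cell dv s c)"
  let ?E = "\<lambda>g. {\<omega>\<in>space M. \<forall>c\<in>grid_indices dv s.
    card (Phi \<omega> \<inter> grid_cell dv s c) = card {i\<in>{..<?k}. g i = c}}"
  have cells: "grid_cell dv s c \<in> sets lborel \<and> bounded (grid_cell dv s c)" for c
    using grid_cell_sets bounded_grid_cell by blast
  have "measure M (grid_event M Phi dv s r xs) \<le> (\<Sum>g\<in>(\<Pi>\<^sub>E i\<in>{..<?k}. ?C i). measure M (?E g))"
    unfolding grid_event_def using poisson_pp_counts_sets[OF P finite_grid_indices] cells
    by (intro finite_measure_subadditive_finite finite_PiE finite_near_cells) auto
  also have "\<dots> \<le> (\<Sum>g\<in>(\<Pi>\<^sub>E i\<in>{..<?k}. ?C i). exp (- (lam * pi * dv ^ 2)) * lam ^ ?k * (\<Prod>i<?k. ?\<mu> (g i)))"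
    by (intro sum_mono prob_grid_counts_le[OF P assms(2-4)] PiE_near_cells_image_subset)
  also have "\<dots> = exp (- (lam * pi * dv ^ 2)) * lam ^ ?k * (\<Sum>g\<in>(\<Pi>\<^sub>E i\<in>{..<?k}. ?C i). \<Prod>i<?k. ?\<mu> (g i))"
    by (simp add: sum_distrib_left)
  also have "(\<Sum>g\<in>(\<Pi>\<^sub>E i\<in>{..<?k}. ?C i). \<Prod>i<?k. ?\<mu> (g i)) = (\<Prod>i<?k. \<Sum>c\<in>?C i. ?\<mu> c)"
    by (rule prod_sum_PiE[symmetric]) (simp_all add: finite_near_cells)
  also have "(\<Prod>i<?k. \<Sum>c\<in>?C i. ?\<mu> c) \<le> (\<Prod>i<?k. pi * (r + 2 * s) ^ 2)"
    using assms(3,5) by (intro prod_mono conjI sum_nonneg measure_nonneg sum_measure_near_cells_le)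
  finally show ?thesis
    using \<open>lam \<ge> 0\<close> by (simp add: mult_left_mono)
qed

lemma Delta_event_eq_INT_grid_event:
  assumes fin: "\<And>\<omega>. \<omega> \<in> space M \<Longrightarrow> finite (Phi \<omega> \<inter> cball 0 dv)"
    and "eps \<ge> 0" and s: "\<And>n. s n > 0" "s \<longlonglongrightarrow> 0"
  shows "{\<omega>\<in>space M. Delta_s (orderings xs) (meas_F dv (Phi \<omega>)) \<le> ereal eps}
    = (\<Inter>n. grid_event M Phi dv (s n) (eps + s n) xs)"
proof (intro equalityI subsetI)
  fix \<omega> assume \<omega>: "\<omega> \<in> {\<omega>\<in>space M. Delta_s (orderings xs) (meas_F dv (Phi \<omega>)) \<le> ereal eps}"
  show "\<omega> \<in> (\<Inter>n. grid_event M Phi dv (s n) (eps + s n) xs)"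
  proof
    fix n
    have "Delta_s (orderings xs) (meas_F dv (Phi \<omega>)) < ereal (eps + s n)"
      using \<omega> s(1)[of n] by (auto elim: order.strict_trans1)
    then obtain w where "w \<in> meas_F dv (Phi \<omega>)" "length w = length xs"
      "\<And>i. i < length xs \<Longrightarrow> dist (xs ! i) (w ! i) \<le> eps + s n"
      by (rule Delta_s_less_listing) (auto intro: less_imp_le)
    then obtain g where "g \<in> (\<Pi>\<^sub>E i\<in>{..<length xs}. near_cells dv (s n) (eps + s n) (xs ! i))"
      "\<And>c. card (Phi \<omega> \<inter> grid_cell dv (s n) c) = card {i\<in>{..<length xs}. g i = c}"
      using grid_counts_of_listing[OF s(1)[of n]] by blast
    then show "\<omega> \<in> grid_event M Phi dv (s n) (eps + s n) xs"
      using \<omega> unfolding grid_event_def by blast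
  qed
next
  fix \<omega> assume \<omega>: "\<omega> \<in> (\<Inter>n. grid_event M Phi dv (s n) (eps + s n) xs)"
  then have "\<omega> \<in> space M"
    by (auto simp: grid_event_def)
  have "Delta_s (orderings xs) (meas_F dv (Phi \<omega>)) \<le> ereal (eps + s n + 2 * s n)" for n
  proof -
    have "\<omega> \<in> grid_event M Phi dv (s n) (eps + s n) xs"
      using \<omega> by blast
    then obtain g where g: "g \<in> (\<Pi>\<^sub>E i\<in>{..<length xs}. near_cells dv (s n) (eps + s n) (xs ! i))"
      and "\<omega> \<in> {\<omega>\<in>space M. \<forall>c\<in>grid_indices dv (s n).
        card (Phi \<omega> \<inter> grid_cell dv (s n) c) = card {i\<in>{..<length xs}. g i = c}}"
      unfolding grid_event_def by (rule UN_E)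
    then have counts: "\<And>c. c \<in> grid_indices dv (s n) \<Longrightarrow>
        card (Phi \<omega> \<inter> grid_cell dv (s n) c) = card {i\<in>{..<length xs}. g i = c}"
      by simp
    obtain w where "w \<in> meas_F dv (Phi \<omega>)" "length w = length xs"
      "\<And>i. i < length xs \<Longrightarrow> dist (xs ! i) (w ! i) \<le> eps + s n + 2 * s n"
      using listing_of_grid_counts[OF s(1)[of n] fin[OF \<open>\<omega> \<in> space M\<close>] g counts] by blast
    then show ?thesis
      using \<open>eps \<ge> 0\<close> s(1)[of n] by (intro Delta_s_orderings_le[where w = w]) auto
  qed
  moreover have "(\<lambda>n. eps + s n + 2 * s n) \<longlonglongrightarrow> eps + 0 + 0"
    by (intro tendsto_add tendsto_const s(2) tendsto_mult_right_zero[OF s(2)])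
  then have "(\<lambda>n. ereal (eps + s n + 2 * s n)) \<longlonglongrightarrow> ereal eps"
    by simp
  ultimately have "Delta_s (orderings xs) (meas_F dv (Phi \<omega>)) \<le> ereal eps"
    using LIMSEQ_le_const by blast
  with \<open>\<omega> \<in> space M\<close> show "\<omega> \<in> {\<omega>\<in>space M. Delta_s (orderings xs) (meas_F dv (Phi \<omega>)) \<le> ereal eps}"
    by simp
qed

lemma measure_Delta_event_le:
  assumes P: "poisson_pp M lam Phi" and "lam \<ge> 0" "dv \<ge> 0" "eps \<ge> 0"
  shows "{\<omega>\<in>space M. Delta_s (orderings xs) (meas_F dv (Phi \<omega>)) \<le> ereal eps} \<in> sets M \<and>
    measure M {\<omega>\<in>space M. Delta_s (orderings xs) (meas_F dv (Phi \<omega>)) \<le> ereal eps}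
      \<le> exp (- (lam * pi * dv ^ 2)) * lam ^ length xs * (pi * eps ^ 2) ^ length xs"
proof -
  interpret prob_space M using P by (rule poisson_pp_prob_space)
  let ?E = "{\<omega>\<in>space M. Delta_s (orderings xs) (meas_F dv (Phi \<omega>)) \<le> ereal eps}"
  define s :: "nat \<Rightarrow> real" where "s n = inverse (real (Suc n))" for n
  define G where "G n = grid_event M Phi dv (s n) (eps + s n) xs" for n
  define B where "B t = exp (- (lam * pi * dv ^ 2)) * lam ^ length xs * (pi * (eps + 3 * t) ^ 2) ^ length xs"
    for t
  have s: "s n > 0" for n by (simp add: s_def)
  have "s \<longlonglongrightarrow> 0" unfolding s_def by (rule LIMSEQ_inverse_real_of_nat)
  have E_eq: "?E = (\<Inter>n. G n)"
    unfolding G_def using poisson_pp_finite[OF P] \<open>eps \<ge> 0\<close> s \<open>s \<longlonglongrightarrow> 0\<close>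
    by (intro Delta_event_eq_INT_grid_event) auto
  have G_sets: "G n \<in> sets M" for n
    unfolding G_def using P by (rule grid_event_sets)
  have "measure M ?E \<le> B (s n)" for n
  proof -
    have "measure M ?E \<le> measure M (G n)"
      by (rule finite_measure_mono[OF _ G_sets]) (auto simp: E_eq)
    also have "\<dots> \<le> B (s n)"
      using measure_grid_event_le[OF P, of "s n" dv "eps + s n" xs] assms s[of n]
      by (simp add: G_def B_def algebra_simps)
    finally show ?thesis .
  qed
  moreover have "(\<lambda>n. B (s n)) \<longlonglongrightarrow> B 0"
    unfolding B_def using \<open>s \<longlonglongrightarrow> 0\<close> by (intro tendsto_intros)
  ultimately have "measure M ?E \<le> B 0"
    by (intro LIMSEQ_le_const) auto
  then show ?thesis
    using G_sets by (simp add: E_eq B_def)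
qed

theorem lemma8:
  fixes M :: "'w measure" and Phi :: "'w \<Rightarrow> pt set"
    and lam dv eps :: real and xs :: "pt list"
  assumes "poisson_pp M lam Phi" and "lam > 0" and "dv > 0" and "eps \<ge> 0"
  defines "m \<equiv> lam * pi * dv ^ 2"
  shows "{\<omega>\<in>space M. Delta_s (orderings xs) (meas_F dv (Phi \<omega>)) \<le> ereal eps} \<in> sets M \<and>
         measure M {\<omega>\<in>space M. Delta_s (orderings xs) (meas_F dv (Phi \<omega>)) \<le> ereal eps}
           \<le> m ^ length xs * exp (- m) *
             (\<Prod>i<length xs. measure lborel (cball (xs ! i) eps) / (pi * dv ^ 2))"
proof -
  have eq: "exp (- m) * lam ^ length xs * (pi * eps ^ 2) ^ length xs
      = m ^ length xs * exp (- m) * (\<Prod>i<length xs. measure lborel (cball (xs ! i) eps) / (pi * dv ^ 2))"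
    using assms(3,4) by (simp add: m_def measure_cball_2 power_mult_distrib field_simps)
  have "{\<omega>\<in>space M. Delta_s (orderings xs) (meas_F dv (Phi \<omega>)) \<le> ereal eps} \<in> sets M \<and>
      measure M {\<omega>\<in>space M. Delta_s (orderings xs) (meas_F dv (Phi \<omega>)) \<le> ereal eps}
        \<le> exp (- m) * lam ^ length xs * (pi * eps ^ 2) ^ length xs"
    unfolding m_def using assms(1-4) by (intro measure_Delta_event_le) auto
  then show ?thesis
    unfolding eq .
qed

end
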